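(* Let $n$ be a nonnegative integer and let \[ T_n(a,b,c)=(1+a-c)_n(c)_n\,{}_4F_3\!\left(\left.{-n,\frac{a}{2},\frac{a+1}{2},b \atop a,1+a-c,c}\right|4\right). \] Define \[ U_n(x,y,z)=T_n\!\left(x-y-z,\ \frac{1+3x-y-z-2n}{2},\ \frac{1+x+y-3z}{2}\right). \] Then $U_n$ is a symmetric function of $x,y,z$, i.e. it is invariant under all six permutations of $x,y,z$: \[ U_n(x,y,z)=U_n(x,z,y)=U_n(y,x,z)=U_n(y,z,x)=U_n(z,x,y)=U_n(z,y,x). \] Moreover, these six invariances $U_n(x,y,z)=U_n(x,y,z)$, $U_n(x,y,z)=U_n(x,z,y)$, $U_n(x,y,z)=U_n(y,x,z)$, $U_n(x,y,z)=U_n(y,z,x)$, $U_n(x,y,z)=U_n(z,x,y)$, $U_n(x,y,z)=U_n(z,y,x)$ correspond, respectively, to the following six invariances of $T_n$: \begin{align*} &T_n(a,b,c)=T_n(a,b,c),\\ &T_n(a,b,c)=T_n(a,b,1+a-c),\\ &T_n(a,b,c)=T_n(c-b-n,c-a-n,c),\\ &T_n(a,b,c)=T_n(c-b-n,c-a-n,1-b-n),\\ &T_n(a,b,c)=T_n(1+a-b-c-n,1-c-n,1+a-c),\\ &T_n(a,b,c)=T_n(1+a-b-c-n,1-c-n,1-b-n). \end{align*}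
   Context: Here $(a)_n=a(a+1)\cdots(a+n-1)$ for $n>0$ and $(a)_0=1$ is the rising factorial, and ${}_{p}F_q\!\left(\left.{a_1,\ldots,a_p \atop b_1,\ldots,b_q}\right|z\right)=\sum_{k\ge 0}\frac{(a_1)_k\cdots(a_p)_k}{k!(b_1)_k\cdots(b_q)_k}z^k$ is the generalized hypergeometric series; the ${}_4F_3(4)$ series above terminates since one numerator parameter is $-n$. Denominator parameters are assumed not to be nonpositive integers. The six invariances of $T_n$ listed form a group isomorphic to $S_3$, generated by the trivial invariance $T_n(a,b,c)=T_n(a,b,1+a-c)$ and the nontrivial one $T_n(a,b,c)=T_n(c-b-n,c-a-n,c)$. *)

theory Defs
  imports Complex_Main "HOL-Library.Nonpos_Ints"
begin

definition hyp_term :: "complex list \<Rightarrow> complex list \<Rightarrow> complex \<Rightarrow> nat \<Rightarrow> complex" where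
  "hyp_term as bs z k =
     (\<Prod>a\<leftarrow>as. pochhammer a k) / (fact k * (\<Prod>b\<leftarrow>bs. pochhammer b k)) * z ^ k"

text \<open>The 4F3 series of T_n; it terminates since one numerator parameter is -n
  (all terms with k > n vanish), so it is the finite sum over k = 0..n.\<close>
definition F43_T :: "nat \<Rightarrow> complex \<Rightarrow> complex \<Rightarrow> complex \<Rightarrow> complex" where
  "F43_T n a b c =
     (\<Sum>k\<le>n. hyp_term [- of_nat n, a/2, (a+1)/2, b] [a, 1+a-c, c] 4 k)"

definition T :: "nat \<Rightarrow> complex \<Rightarrow> complex \<Rightarrow> complex \<Rightarrow> complex" where
  "T n a b c = pochhammer (1+a-c) n * pochhammer c n * F43_T n a b c"

definition T_ok :: "complex \<Rightarrow> complex \<Rightarrow> bool" where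
  "T_ok a c \<longleftrightarrow> a \<notin> \<int>\<^sub>\<le>\<^sub>0 \<and> 1+a-c \<notin> \<int>\<^sub>\<le>\<^sub>0 \<and> c \<notin> \<int>\<^sub>\<le>\<^sub>0"

definition Upar :: "nat \<Rightarrow> complex \<Rightarrow> complex \<Rightarrow> complex \<Rightarrow> complex \<times> complex \<times> complex" where
  "Upar n x y z = (x - y - z, (1 + 3*x - y - z - 2 * of_nat n) / 2, (1 + x + y - 3*z) / 2)"

definition U :: "nat \<Rightarrow> complex \<Rightarrow> complex \<Rightarrow> complex \<Rightarrow> complex" where
  "U n x y z = (case Upar n x y z of (a, b, c) \<Rightarrow> T n a b c)"

definition U_ok :: "nat \<Rightarrow> complex \<Rightarrow> complex \<Rightarrow> complex \<Rightarrow> bool" where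
  "U_ok n x y z = (case Upar n x y z of (a, b, c) \<Rightarrow> T_ok a c)"

end

theory Submission
  imports Defs
begin

text \<open>Clearing denominators with (a/2)_k ((a+1)/2)_k 4^k = (a)_{2k} and (-n)_k = (-1)^k k! C(n,k)
  turns T_n(a,b,c) into the polynomial
  \<Sum>_k (-1)^k C(n,k) (a+k)_k (b)_k (1+a-c+k)_{n-k} (c+k)_{n-k},
  which is visibly invariant under c \<mapsto> 1+a-c. Expanding (a+k)_k by Chu--Vandermonde rewrites
  it as the double sum
  \<Sum>_{j\<le>k\<le>n} (-1)^{n-j} C(n,k) C(k,j) (c+j)_{n-j} (b)_k (c-a-n)_{n-k+j},
  and the reflection k \<mapsto> n+j-k shows that it is symmetric in b and c-a-n: this is the invariance
  (a,b,c) \<mapsto> (c-b-n, c-a-n, c). These two involutions generate the other invariances, and U_n is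
  the reparametrisation of T_n in which they become the permutations of x, y, z.\<close>

lemma pochhammer_reflect:
  "pochhammer (1 - x - of_nat m) m = ((-1) ^ m :: 'a::comm_ring_1) * pochhammer x m"
  using pochhammer_minus[of "x + of_nat m - 1" m] by (simp add: algebra_simps)

lemma pochhammer_minus_of_nat:
  "pochhammer (- of_nat n) k = ((-1) ^ k :: 'a::field_char_0) * of_nat (n choose k) * fact k"
  by (simp add: binomial_gbinomial gbinomial_pochhammer flip: power_mult_distrib)

lemma pochhammer_half_mult:
  fixes a :: "'a::field_char_0"
  shows "pochhammer (a / 2) k * pochhammer ((a + 1) / 2) k * 4 ^ k
    = pochhammer a k * pochhammer (a + of_nat k) k"
proof -
  have "pochhammer a (2 * k) = 4 ^ k * pochhammer (a / 2) k * pochhammer ((a + 1) / 2) k"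
    using pochhammer_double[of "a / 2" k] by (simp add: add_divide_distrib power_mult)
  moreover have "pochhammer a (2 * k) = pochhammer a k * pochhammer (a + of_nat k) k"
    using pochhammer_product'[of a k k] by (simp add: mult_2)
  ultimately show ?thesis by (simp add: mult_ac)
qed

lemma sum_triangle_swap:
  fixes f :: "nat \<Rightarrow> nat \<Rightarrow> 'a::comm_monoid_add"
  shows "(\<Sum>k\<le>n. \<Sum>j\<le>k. f k j) = (\<Sum>j\<le>n. \<Sum>k=j..n. f k j)"
proof -
  have "(\<Sum>k\<le>n. \<Sum>j\<le>k. f k j) = (\<Sum>k\<le>n. \<Sum>j\<in>{j. j \<in> {..n} \<and> j \<le> k}. f k j)"
    by (intro sum.cong) auto
  also have "\<dots> = (\<Sum>j\<le>n. \<Sum>k\<in>{k. k \<in> {..n} \<and> j \<le> k}. f k j)"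
    by (rule sum.swap_restrict) auto
  also have "\<dots> = (\<Sum>j\<le>n. \<Sum>k=j..n. f k j)"
    by (intro sum.cong) auto
  finally show ?thesis .
qed

lemma choose_mult_reflect:
  assumes "j \<le> k" "k \<le> n"
  shows "(n choose (n + j - k)) * ((n + j - k) choose j) = (n choose k) * (k choose j)"
proof -
  have "(n choose (n + j - k)) * ((n + j - k) choose j) = (n choose j) * ((n - j) choose (n - k))"
    using choose_mult[of j "n + j - k" n] assms by simp
  also have "\<dots> = (n choose j) * ((n - j) choose (k - j))"
    using binomial_symmetric[of "k - j" "n - j"] assms by simp
  also have "\<dots> = (n choose k) * (k choose j)"
    using choose_mult[of j k n] assms by simp
  finally show ?thesis .
qed

definition T_poly :: "nat \<Rightarrow> 'a::comm_ring_1 \<Rightarrow> 'a \<Rightarrow> 'a \<Rightarrow> 'a" where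
  "T_poly n a b c = (\<Sum>k\<le>n. (-1) ^ k * of_nat (n choose k) * pochhammer (a + of_nat k) k
     * pochhammer b k * pochhammer (1 + a - c + of_nat k) (n - k) * pochhammer (c + of_nat k) (n - k))"

definition T_double_sum :: "nat \<Rightarrow> 'a::comm_ring_1 \<Rightarrow> 'a \<Rightarrow> 'a \<Rightarrow> 'a" where
  "T_double_sum n c u v = (\<Sum>j\<le>n. (-1) ^ (n - j) * pochhammer (c + of_nat j) (n - j)
     * (\<Sum>k=j..n. of_nat (n choose k) * of_nat (k choose j) * pochhammer u k * pochhammer v (n - k + j)))"

lemma T_poly_summand_expand:
  fixes a c :: "'a::comm_ring_1"
  assumes "k \<le> n"
  shows "(-1) ^ k * pochhammer (a + of_nat k) k * pochhammer (1 + a - c + of_nat k) (n - k)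
      * pochhammer (c + of_nat k) (n - k)
    = (\<Sum>j\<le>k. (-1) ^ (n - j) * of_nat (k choose j) * pochhammer (c + of_nat j) (n - j)
      * pochhammer (c - a - of_nat n) (n - k + j))"
proof -
  obtain e where n: "n = k + e" using assms le_Suc_ex by blast
  define B where "B = c - a - of_nat n"
  have reflect_middle: "pochhammer (1 + a - c + of_nat k) e = (-1) ^ e * pochhammer B e"
    using pochhammer_reflect[of B e] by (simp add: B_def n algebra_simps)
  have reflect_first: "(-1) ^ k * pochhammer (a + of_nat k) k
      = pochhammer ((B + of_nat e) + (1 - c - of_nat k)) k"
    using pochhammer_reflect[of "(B + of_nat e) + (1 - c - of_nat k)" k]
    by (simp add: B_def n algebra_simps flip: power_mult_distrib)
  have summand: "of_nat (k choose j) * pochhammer (B + of_nat e) j * pochhammer (1 - c - of_nat k) (k - j)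
      * ((-1) ^ e * pochhammer B e) * pochhammer (c + of_nat k) e
    = (-1) ^ (n - j) * of_nat (k choose j) * pochhammer (c + of_nat j) (n - j) * pochhammer B (n - k + j)"
    if "j \<le> k" for j
  proof -
    obtain d where k: "k = j + d" using \<open>j \<le> k\<close> le_Suc_ex by blast
    have reflect_last: "pochhammer (1 - c - of_nat k) (k - j) = (-1) ^ d * pochhammer (c + of_nat j) d"
      using pochhammer_reflect[of "c + of_nat j" d] by (simp add: k algebra_simps)
    have merge_B: "pochhammer B e * pochhammer (B + of_nat e) j = pochhammer B (n - k + j)"
      using pochhammer_product'[of B e j] by (simp add: n)
    have merge_c: "pochhammer (c + of_nat j) d * pochhammer (c + of_nat k) e
        = pochhammer (c + of_nat j) (n - j)"
      using pochhammer_product'[of "c + of_nat j" d e] by (simp add: n k add_ac)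
    have sign: "(-1) ^ (n - j) = ((-1) ^ d * (-1) ^ e :: 'a)"
      by (simp add: n k flip: power_add)
    show ?thesis by (simp add: reflect_last sign mult_ac flip: merge_B merge_c)
  qed
  have "(-1) ^ k * pochhammer (a + of_nat k) k * pochhammer (1 + a - c + of_nat k) (n - k)
      * pochhammer (c + of_nat k) (n - k)
    = (\<Sum>j\<le>k. of_nat (k choose j) * pochhammer (B + of_nat e) j * pochhammer (1 - c - of_nat k) (k - j))
      * ((-1) ^ e * pochhammer B e) * pochhammer (c + of_nat k) e"
    unfolding n add_diff_cancel_left' reflect_first reflect_middle
    by (simp only: pochhammer_binomial_sum[of "B + of_nat e" "1 - c - of_nat k" k])
  also have "\<dots> = (\<Sum>j\<le>k. (-1) ^ (n - j) * of_nat (k choose j) * pochhammer (c + of_nat j) (n - j)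
      * pochhammer B (n - k + j))"
    by (simp add: sum_distrib_right summand)
  finally show ?thesis by (simp only: B_def)
qed

lemma trinomial_sum_commute:
  assumes "j \<le> n"
  shows "(\<Sum>k=j..n. of_nat (n choose k) * of_nat (k choose j) * pochhammer u k * pochhammer v (n - k + j))
    = (\<Sum>k=j..n. of_nat (n choose k) * of_nat (k choose j) * pochhammer v k * pochhammer u (n - k + j)
        :: 'a::comm_ring_1)"
proof -
  have "of_nat (n choose (n + j - k)) * of_nat ((n + j - k) choose j)
      = (of_nat (n choose k) * of_nat (k choose j) :: 'a)" if "k \<in> {j..n}" for k
    using choose_mult_reflect[of j k n] that by (simp flip: of_nat_mult)
  then show ?thesis
    by (subst sum.atLeastAtMost_rev) (intro sum.cong refl; simp add: mult.commute)
qed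

lemma T_double_sum_commute: "T_double_sum n c u v = T_double_sum n c v u"
  unfolding T_double_sum_def by (intro sum.cong refl) (simp only: atMost_iff trinomial_sum_commute)

lemma T_poly_eq_double_sum: "T_poly n a b c = T_double_sum n c b (c - a - of_nat n)"
proof -
  have "T_poly n a b c = (\<Sum>k\<le>n. of_nat (n choose k) * pochhammer b k * ((-1) ^ k
      * pochhammer (a + of_nat k) k * pochhammer (1 + a - c + of_nat k) (n - k) * pochhammer (c + of_nat k) (n - k)))"
    unfolding T_poly_def by (intro sum.cong refl) (simp only: mult_ac)
  also have "\<dots> = (\<Sum>k\<le>n. \<Sum>j\<le>k. of_nat (n choose k) * pochhammer b k * ((-1) ^ (n - j)
      * of_nat (k choose j) * pochhammer (c + of_nat j) (n - j) * pochhammer (c - a - of_nat n) (n - k + j)))"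
    by (intro sum.cong refl) (simp add: T_poly_summand_expand sum_distrib_left)
  also have "\<dots> = (\<Sum>j\<le>n. \<Sum>k=j..n. of_nat (n choose k) * pochhammer b k * ((-1) ^ (n - j)
      * of_nat (k choose j) * pochhammer (c + of_nat j) (n - j) * pochhammer (c - a - of_nat n) (n - k + j)))"
    by (rule sum_triangle_swap)
  also have "\<dots> = T_double_sum n c b (c - a - of_nat n)"
    unfolding T_double_sum_def by (intro sum.cong refl) (simp add: sum_distrib_left mult_ac)
  finally show ?thesis .
qed

lemma T_poly_reflect: "T_poly n a b (1 + a - c) = T_poly n a b c"
  unfolding T_poly_def by (intro sum.cong refl) (simp add: mult_ac)

lemma T_poly_swap: "T_poly n (c - b - of_nat n) (c - a - of_nat n) c = T_poly n a b c"
  by (simp add: T_poly_eq_double_sum T_double_sum_commute)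

lemma T_poly_invariances:
  fixes a b c :: "'a::comm_ring_1"
  shows "T_poly n (c - b - of_nat n) (c - a - of_nat n) (1 - b - of_nat n) = T_poly n a b c"
    and "T_poly n (1 + a - b - c - of_nat n) (1 - c - of_nat n) (1 + a - c) = T_poly n a b c"
    and "T_poly n (1 + a - b - c - of_nat n) (1 - c - of_nat n) (1 - b - of_nat n) = T_poly n a b c"
proof -
  have "1 + (c - b - of_nat n) - c = 1 - b - of_nat n" by simp
  from T_poly_reflect[of n "c - b - of_nat n" "c - a - of_nat n" c, unfolded this] T_poly_swap
  show "T_poly n (c - b - of_nat n) (c - a - of_nat n) (1 - b - of_nat n) = T_poly n a b c"
    by (rule trans)
  have "1 + a - c - b - of_nat n = 1 + a - b - c - of_nat n" "1 + a - c - a - of_nat n = 1 - c - of_nat n"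
    by simp_all
  from T_poly_swap[where n = n and a = a and b = b and c = "1 + a - c", unfolded this] T_poly_reflect
  show swap_reflected: "T_poly n (1 + a - b - c - of_nat n) (1 - c - of_nat n) (1 + a - c) = T_poly n a b c"
    by (rule trans)
  have "1 + (1 + a - b - c - of_nat n) - (1 + a - c) = 1 - b - of_nat n" by simp
  from T_poly_reflect[of n "1 + a - b - c - of_nat n" "1 - c - of_nat n" "1 + a - c", unfolded this]
    swap_reflected
  show "T_poly n (1 + a - b - c - of_nat n) (1 - c - of_nat n) (1 - b - of_nat n) = T_poly n a b c"
    by (rule trans)
qed

lemma T_eq_T_poly:
  assumes "T_ok a c"
  shows "T n a b c = T_poly n a b c"
proof -
  have nonzero: "pochhammer a k \<noteq> 0" "pochhammer (1 + a - c) k \<noteq> 0" "pochhammer c k \<noteq> 0" for k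
    using assms by (auto simp: T_ok_def pochhammer_eq_0_iff)
  have "pochhammer (1 + a - c) n * pochhammer c n * hyp_term [- of_nat n, a/2, (a+1)/2, b] [a, 1+a-c, c] 4 k
    = (-1) ^ k * of_nat (n choose k) * pochhammer (a + of_nat k) k * pochhammer b k
      * pochhammer (1 + a - c + of_nat k) (n - k) * pochhammer (c + of_nat k) (n - k)"
    if "k \<le> n" for k
  proof -
    have numerator: "pochhammer (- of_nat n) k * (pochhammer (a/2) k * pochhammer ((a+1)/2) k * 4 ^ k)
      = (-1) ^ k * of_nat (n choose k) * fact k * (pochhammer a k * pochhammer (a + of_nat k) k)"
      by (simp only: pochhammer_minus_of_nat pochhammer_half_mult)
    have "hyp_term [- of_nat n, a/2, (a+1)/2, b] [a, 1+a-c, c] 4 k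
      = (-1) ^ k * of_nat (n choose k) * pochhammer (a + of_nat k) k * pochhammer b k
        / (pochhammer (1 + a - c) k * pochhammer c k)"
      using numerator nonzero(1) unfolding hyp_term_def by (simp add: field_simps)
    then show ?thesis
      using pochhammer_product[OF that, of "1 + a - c"] pochhammer_product[OF that, of c] nonzero
      by (simp add: field_simps)
  qed
  then show ?thesis
    unfolding T_def F43_T_def T_poly_def sum_distrib_left by (intro sum.cong refl) simp
qed

lemma T_invariances:
  assumes "T_ok a c" "T_ok a (1 + a - c)" "T_ok (c - b - of_nat n) c"
    "T_ok (c - b - of_nat n) (1 - b - of_nat n)" "T_ok (1 + a - b - c - of_nat n) (1 + a - c)"
    "T_ok (1 + a - b - c - of_nat n) (1 - b - of_nat n)"
  shows "T n a b c = T n a b (1 + a - c)"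
    and "T n a b c = T n (c - b - of_nat n) (c - a - of_nat n) c"
    and "T n a b c = T n (c - b - of_nat n) (c - a - of_nat n) (1 - b - of_nat n)"
    and "T n a b c = T n (1 + a - b - c - of_nat n) (1 - c - of_nat n) (1 + a - c)"
    and "T n a b c = T n (1 + a - b - c - of_nat n) (1 - c - of_nat n) (1 - b - of_nat n)"
  using assms by (simp_all add: T_eq_T_poly T_poly_reflect T_poly_swap T_poly_invariances)

lemma Upar_permute:
  assumes "Upar n x y z = (a, b, c)"
  shows "Upar n x z y = (a, b, 1 + a - c)"
    and "Upar n y x z = (c - b - of_nat n, c - a - of_nat n, c)"
    and "Upar n y z x = (c - b - of_nat n, c - a - of_nat n, 1 - b - of_nat n)"
    and "Upar n z x y = (1 + a - b - c - of_nat n, 1 - c - of_nat n, 1 + a - c)"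
    and "Upar n z y x = (1 + a - b - c - of_nat n, 1 - c - of_nat n, 1 - b - of_nat n)"
  using assms unfolding Upar_def by (elim Pair_inject; hypsubst; simp add: field_simps)+

lemma U_symmetric:
  assumes "U_ok n x y z" "U_ok n x z y" "U_ok n y x z" "U_ok n y z x" "U_ok n z x y" "U_ok n z y x"
  shows "U n x y z = U n x z y" and "U n x y z = U n y x z" and "U n x y z = U n y z x"
    and "U n x y z = U n z x y" and "U n x y z = U n z y x"
proof -
  obtain a b c where abc: "Upar n x y z = (a, b, c)" by (metis prod_cases3)
  from assms show "U n x y z = U n x z y" and "U n x y z = U n y x z" and "U n x y z = U n y z x"
    and "U n x y z = U n z x y" and "U n x y z = U n z y x"
    by (simp_all add: U_ok_def U_def abc Upar_permute[OF abc] T_invariances[THEN sym])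
qed

theorem theorem3p2:
  fixes n :: nat
  shows
  \<comment> \<open>U_n is symmetric (wherever all six parameter triples are admissible)\<close>
  "(\<forall>x y z. U_ok n x y z \<and> U_ok n x z y \<and> U_ok n y x z \<and> U_ok n y z x \<and>
        U_ok n z x y \<and> U_ok n z y x \<longrightarrow>
      U n x y z = U n x z y \<and> U n x y z = U n y x z \<and> U n x y z = U n y z x \<and>
      U n x y z = U n z x y \<and> U n x y z = U n z y x)
   \<and>
  \<comment> \<open>the six invariances of T_n\<close>
   (\<forall>a b c. T_ok a c \<and> T_ok a (1+a-c) \<and> T_ok (c-b-of_nat n) c
        \<and> T_ok (c-b-of_nat n) (1-b-of_nat n) \<and> T_ok (1+a-b-c-of_nat n) (1+a-c)
        \<and> T_ok (1+a-b-c-of_nat n) (1-b-of_nat n) \<longrightarrow>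
      T n a b c = T n a b c \<and>
      T n a b c = T n a b (1+a-c) \<and>
      T n a b c = T n (c-b-of_nat n) (c-a-of_nat n) c \<and>
      T n a b c = T n (c-b-of_nat n) (c-a-of_nat n) (1-b-of_nat n) \<and>
      T n a b c = T n (1+a-b-c-of_nat n) (1-c-of_nat n) (1+a-c) \<and>
      T n a b c = T n (1+a-b-c-of_nat n) (1-c-of_nat n) (1-b-of_nat n))
   \<and>
  \<comment> \<open>correspondence: permuting (x,y,z) transforms the T-parameters (a,b,c) as listed\<close>
   (\<forall>x y z a b c. Upar n x y z = (a, b, c) \<longrightarrow>
      Upar n x y z = (a, b, c) \<and>
      Upar n x z y = (a, b, 1+a-c) \<and>
      Upar n y x z = (c-b-of_nat n, c-a-of_nat n, c) \<and>
      Upar n y z x = (c-b-of_nat n, c-a-of_nat n, 1-b-of_nat n) \<and>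
      Upar n z x y = (1+a-b-c-of_nat n, 1-c-of_nat n, 1+a-c) \<and>
      Upar n z y x = (1+a-b-c-of_nat n, 1-c-of_nat n, 1-b-of_nat n))"
  by (intro conjI allI impI; (elim conjE)?;
      (rule refl | assumption | (rule U_symmetric T_invariances Upar_permute; assumption)))

end
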